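(* Let $k\ge2$ and $n\ge0$. The map $\phi:\mathcal{T}^k_n\to\overline{\mathcal{Q}}^k_n$ defined below is a well-defined bijection from compartmented trees with $n$ edges onto $k$-quasi-Stirling permutations of size $n$. For a non-root vertex $c$ of $T\in\mathcal{T}^k_n$ whose edge to its parent has label $\ell$, define recursively the word $W(c)=\ell\,U_1\,\ell\,U_2\,\ell\cdots\ell\,U_{k-1}\,\ell$, where $U_j$ is the concatenation of $W(c')$ over the children $c'$ of $c$ in its $j$-th compartment, from left to right (so $\ell$ occurs exactly $k$ times in $W(c)$ outside the $U_j$). Then $\phi(T)$ is the concatenation of $W(c)$ over the children $c$ of the root, from left to right. (Equivalently: label each half-edge at a non-root vertex $v$ with the label of the edge from $v$ to its parent, traverse edges and half-edges by a left-to-right depth-first walk, recording edge labels each time an edge is traversed and half-edge labels once.)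
   Context: For $k\ge2$, a compartmented tree with $n$ edges is a plane (ordered) rooted tree with $n$ edges labeled bijectively by $\{1,\dots,n\}$, in which every vertex other than the root has $k-2$ unlabeled half-edges serving as walls that separate its children into $k-1$ ordered, possibly empty, compartments (the root has no half-edges; its children form a single ordered list). $\mathcal{T}^k_n$ denotes the set of such trees. A $k$-quasi-Stirling permutation of size $n$ is a permutation $\pi$ of the multiset $\{1^k,\dots,n^k\}$ (each of $1,\dots,n$ appearing $k$ times) with no indices $i<j<m<\ell$ such that $\pi_i=\pi_m\neq\pi_j=\pi_\ell$; $\overline{\mathcal{Q}}^k_n$ is their set. *)

theory Defs
  imports "HOL-Library.Multiset"
begin

text \<open>A non-root vertex: the label of the edge to its parent, and its list of
compartments (each an ordered list of children).  The root is represented by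
the ordered list of its children (a forest).\<close>
datatype cnode = CNode nat "cnode list list"

fun wf_node :: "nat \<Rightarrow> cnode \<Rightarrow> bool" where
  "wf_node k (CNode l cs) = (length cs = k - 1 \<and> (\<forall>c\<in>set cs. \<forall>t\<in>set c. wf_node k t))"

fun node_labels :: "cnode \<Rightarrow> nat list" where
  "node_labels (CNode l cs) = l # concat (map (\<lambda>c. concat (map node_labels c)) cs)"

definition forest_labels :: "cnode list \<Rightarrow> nat list" where
  "forest_labels F = concat (map node_labels F)"

definition compartmented_trees :: "nat \<Rightarrow> nat \<Rightarrow> cnode list set" where
  "compartmented_trees k n =
     {F. (\<forall>t\<in>set F. wf_node k t) \<and> distinct (forest_labels F) \<and> set (forest_labels F) = {1..n}}"

fun W :: "cnode \<Rightarrow> nat list" where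
  "W (CNode l cs) = l # concat (map (\<lambda>c. concat (map W c) @ [l]) cs)"

definition phi :: "cnode list \<Rightarrow> nat list" where
  "phi F = concat (map W F)"

definition quasi_stirling :: "nat \<Rightarrow> nat \<Rightarrow> nat list set" where
  "quasi_stirling k n =
     {w. mset w = (\<Sum>i\<in>{1..n}. replicate_mset k i) \<and>
         \<not> (\<exists>i j m l. i < j \<and> j < m \<and> m < l \<and> l < length w \<and>
               w ! i = w ! m \<and> w ! j = w ! l \<and> w ! i \<noteq> w ! j)}"

end

theory Submission
  imports Defs "HOL-Library.Sublist"
begin

(* Decoding phi: in a nonempty abab-free word in which every letter occurs k times, the
   first letter a is the label of the first child c of the root, and the other k - 1
   occurrences of a cut the word into the words of the compartments of c, followed by the
   encoding of the remaining children of the root. Avoiding abab forces every letter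
   between two occurrences of a to have all its occurrences there, so each piece is again
   such a word and the decoding recurses; with distinct labels the cuts are forced, which
   gives injectivity. Conversely, phi(T) avoids abab because pattern avoidance survives
   inserting a word over a disjoint alphabet and repeating the last letter. *)

section \<open>Words avoiding the pattern abab\<close>

definition abab_free :: "'a list \<Rightarrow> bool" where
  "abab_free w \<longleftrightarrow> (\<forall>a b. subseq [a, b, a, b] w \<longrightarrow> a = b)"

lemma subseq_Cons_drop_iff:
  "subseq (x # xs) (drop p w) \<longleftrightarrow>
     (\<exists>i. p \<le> i \<and> i < length w \<and> w ! i = x \<and> subseq xs (drop (Suc i) w))"
proof (induction "length w - p" arbitrary: p)
  case 0
  then show ?case by auto
next
  case (Suc d)
  let ?Q = "\<lambda>i. i < length w \<and> w ! i = x \<and> subseq xs (drop (Suc i) w)"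
  have "drop p w = w ! p # drop (Suc p) w"
    using Suc.hyps(2) by (simp add: Cons_nth_drop_Suc)
  then have "subseq (x # xs) (drop p w) \<longleftrightarrow> ?Q p \<or> subseq (x # xs) (drop (Suc p) w)"
    using Suc.hyps(2) by (auto intro: subseq_Cons')
  also have "\<dots> \<longleftrightarrow> ?Q p \<or> (\<exists>i. Suc p \<le> i \<and> ?Q i)"
    using Suc by simp
  also have "\<dots> \<longleftrightarrow> (\<exists>i. p \<le> i \<and> ?Q i)"
    by (metis Suc_le_eq le_eq_less_or_eq)
  finally show ?case .
qed

lemma subseq_abab_iff_indices:
  "subseq [a, b, a, b] w \<longleftrightarrow>
     (\<exists>i j m l. i < j \<and> j < m \<and> m < l \<and> l < length w \<and>
        w ! i = a \<and> w ! j = b \<and> w ! m = a \<and> w ! l = b)"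
proof -
  have "subseq [a, b, a, b] (drop 0 w) \<longleftrightarrow>
      (\<exists>i j m l. i < j \<and> j < m \<and> m < l \<and> l < length w \<and>
         w ! i = a \<and> w ! j = b \<and> w ! m = a \<and> w ! l = b)"
    unfolding subseq_Cons_drop_iff
  proof (simp add: Suc_le_eq, intro iffI)
    assume "\<exists>i<length w. w ! i = a \<and> (\<exists>j>i. j < length w \<and> w ! j = b \<and>
      (\<exists>m>j. m < length w \<and> w ! m = a \<and> (\<exists>l>m. l < length w \<and> w ! l = b)))"
    then show "\<exists>i j. i < j \<and> (\<exists>m>j. \<exists>l>m. l < length w \<and>
      w ! i = a \<and> w ! j = b \<and> w ! m = a \<and> w ! l = b)"
      by blast
  next
    assume "\<exists>i j. i < j \<and> (\<exists>m>j. \<exists>l>m. l < length w \<and>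
      w ! i = a \<and> w ! j = b \<and> w ! m = a \<and> w ! l = b)"
    then obtain i j m l where "i < j" "j < m" "m < l" "l < length w"
      "w ! i = a" "w ! j = b" "w ! m = a" "w ! l = b"
      by blast
    then show "\<exists>i<length w. w ! i = a \<and> (\<exists>j>i. j < length w \<and> w ! j = b \<and>
      (\<exists>m>j. m < length w \<and> w ! m = a \<and> (\<exists>l>m. l < length w \<and> w ! l = b)))"
      by (intro exI[of _ i] conjI exI[of _ j] exI[of _ m] exI[of _ l]) auto
  qed
  then show ?thesis
    by simp
qed

lemma abab_free_iff_no_indices:
  "abab_free w \<longleftrightarrow>
     \<not> (\<exists>i j m l. i < j \<and> j < m \<and> m < l \<and> l < length w \<and>
          w ! i = w ! m \<and> w ! j = w ! l \<and> w ! i \<noteq> w ! j)"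
  unfolding abab_free_def subseq_abab_iff_indices
proof (intro iffI notI allI impI)
  fix a b
  assume none: "\<not> (\<exists>i j m l. i < j \<and> j < m \<and> m < l \<and> l < length w \<and>
      w ! i = w ! m \<and> w ! j = w ! l \<and> w ! i \<noteq> w ! j)"
    and "\<exists>i j m l. i < j \<and> j < m \<and> m < l \<and> l < length w \<and>
      w ! i = a \<and> w ! j = b \<and> w ! m = a \<and> w ! l = b"
  then obtain i j m l where "i < j" "j < m" "m < l" "l < length w"
    and "w ! i = a" "w ! j = b" "w ! m = a" "w ! l = b"
    by blast
  moreover from none this(1-4) have "w ! i = w ! m \<Longrightarrow> w ! j = w ! l \<Longrightarrow> w ! i = w ! j"
    by blast
  ultimately show "a = b"
    by simp
next
  assume free: "\<forall>a b. (\<exists>i j m l. i < j \<and> j < m \<and> m < l \<and> l < length w \<and>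
      w ! i = a \<and> w ! j = b \<and> w ! m = a \<and> w ! l = b) \<longrightarrow> a = b"
    and "\<exists>i j m l. i < j \<and> j < m \<and> m < l \<and> l < length w \<and>
      w ! i = w ! m \<and> w ! j = w ! l \<and> w ! i \<noteq> w ! j"
  then obtain i j m l where "i < j" "j < m" "m < l" "l < length w"
    and "w ! i = w ! m" "w ! j = w ! l" "w ! i \<noteq> w ! j"
    by blast
  moreover from this have "\<exists>i' j' m' l'. i' < j' \<and> j' < m' \<and> m' < l' \<and> l' < length w \<and>
      w ! i' = w ! i \<and> w ! j' = w ! j \<and> w ! m' = w ! i \<and> w ! l' = w ! j"
    by (intro exI[of _ i] exI[of _ j] exI[of _ m] exI[of _ l]) simp
  ultimately show False
    using free[rule_format] by blast
qed

lemma abab_free_subseq: "subseq v w \<Longrightarrow> abab_free w \<Longrightarrow> abab_free v"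
  unfolding abab_free_def by (meson subseq_order.trans)

lemma abab_free_infix: "abab_free (x @ y @ z) \<Longrightarrow> abab_free y"
  by (meson abab_free_subseq subseq_drop_many subseq_rev_drop_many subseq_order.refl)

lemma abab_free_short: "length w < 4 \<Longrightarrow> abab_free w"
  unfolding abab_free_def using list_emb_length by fastforce

lemma abab_split_three:
  assumes "p1 @ p2 @ p3 = [a, b, a, b]" "a \<noteq> b" "p2 \<noteq> []"
    and "set p1 \<inter> set p2 = {}" "set p2 \<inter> set p3 = {}"
  shows "p1 = [] \<and> p3 = []"
  using assms by (auto simp: append_eq_Cons_conv Cons_eq_append_conv)

lemma abab_free_insert:
  assumes "abab_free (x @ y)" "abab_free u" "set u \<inter> set (x @ y) = {}"
  shows "abab_free (x @ u @ y)"
  unfolding abab_free_def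
proof (intro allI impI)
  fix a b
  assume "subseq [a, b, a, b] (x @ u @ y)"
  then obtain p1 p2 p3 where p: "[a, b, a, b] = p1 @ p2 @ p3"
    and sub: "subseq p1 x" "subseq p2 u" "subseq p3 y"
    by (auto elim!: subseq_appendE)
  show "a = b"
  proof (cases "p2 = []")
    case True
    then have "subseq [a, b, a, b] (x @ y)"
      using p sub by (simp add: list_emb_append_mono)
    then show ?thesis
      using assms(1) unfolding abab_free_def by blast
  next
    case False
    have "set p1 \<subseteq> set x" "set p2 \<subseteq> set u" "set p3 \<subseteq> set y"
      using sub by (auto dest: list_emb_set)
    then have "a = b \<or> p1 = [] \<and> p3 = []"
      using abab_split_three[of p1 p2 p3 a b] p False assms(3) by auto
    then show ?thesis
      using p sub(2) assms(2) unfolding abab_free_def by auto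
  qed
qed

lemma abab_free_snoc_repeat:
  assumes "abab_free (xs @ [x])"
  shows "abab_free (xs @ [x, x])"
  unfolding abab_free_def
proof (intro allI impI)
  fix a b
  assume "subseq [a, b, a, b] (xs @ [x, x])"
  then obtain p1 p2 where p: "[a, b, a, b] = p1 @ p2" and sub: "subseq p1 xs" "subseq p2 [x, x]"
    by (auto elim!: subseq_appendE)
  have "a = b \<or> subseq p2 [x]"
    using p sub(2) by (auto simp: append_eq_Cons_conv Cons_eq_append_conv split: if_splits)
  then show "a = b"
    using p sub(1) assms unfolding abab_free_def by (auto dest: list_emb_append_mono)
qed

lemma subseq_Cons_appendI:
  assumes "x \<in> set ys" "subseq xs zs"
  shows "subseq (x # xs) (ys @ zs)"
proof -
  obtain u v where "ys = u @ x # v"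
    using split_list[OF assms(1)] by blast
  then show ?thesis
    using assms(2) by (simp add: subseq_drop_many)
qed

lemma abab_free_separates:
  assumes "abab_free (L @ a # P @ a # R)" "b \<in> set P" "b \<noteq> a"
  shows "b \<notin> set L" "b \<notin> set R"
proof -
  have "subseq [b, a, b, a] (L @ a # P @ a # R)" if "b \<in> set L"
    using that assms(2) by (simp add: subseq_Cons_appendI subseq_singleton_left)
  then show "b \<notin> set L"
    using assms unfolding abab_free_def by blast
  have "subseq [a, b, a, b] (L @ a # P @ a # R)" if "b \<in> set R"
    using that assms(2) by (intro subseq_drop_many) (simp add: subseq_Cons_appendI subseq_singleton_left)
  then show "b \<notin> set R"
    using assms unfolding abab_free_def by blast
qed

lemma abab_free_factor:
  assumes "abab_free (x @ y @ z)" "\<forall>c\<in>set (x @ y @ z). count (mset (x @ y @ z)) c = k"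
    and "set y \<inter> set (x @ z) = {}"
  shows "abab_free y \<and> (\<forall>c\<in>set y. count (mset y) c = k)"
proof (intro conjI ballI)
  show "abab_free y"
    using assms(1) by (rule abab_free_infix)
  fix c
  assume "c \<in> set y"
  moreover from this have "c \<notin> set x" "c \<notin> set z"
    using assms(3) by auto
  moreover have "count (mset (x @ y @ z)) c = k"
    using assms(2) \<open>c \<in> set y\<close> by simp
  ultimately show "count (mset y) c = k"
    by (simp add: count_mset_0_iff[THEN iffD2])
qed

lemma split_at_occurrences:
  "count (mset r) a = m \<Longrightarrow>
    \<exists>Us S. r = concat (map (\<lambda>u. u @ [a]) Us) @ S \<and> length Us = m \<and>
      (\<forall>u\<in>set Us. a \<notin> set u) \<and> a \<notin> set S"
proof (induction m arbitrary: r)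
  case 0
  then show ?case
    by (intro exI[of _ "[]"] exI[of _ r]) auto
next
  case (Suc m)
  then obtain u r' where r: "r = u @ a # r'" "a \<notin> set u"
    by (metis count_mset_0_iff nat.simps(3) split_list_first)
  then have "count (mset r') a = m"
    using Suc.prems by (simp add: count_mset_0_iff[THEN iffD2])
  then obtain Us S where "r' = concat (map (\<lambda>u. u @ [a]) Us) @ S" "length Us = m"
    "\<forall>u\<in>set Us. a \<notin> set u" "a \<notin> set S"
    using Suc.IH by blast
  then show ?case
    using r by (intro exI[of _ "u # Us"] exI[of _ S]) simp
qed

lemma split_around_block:
  assumes "u \<in> set Us"
  obtains L R where "a # concat (map (\<lambda>u. u @ [a]) Us) @ S = L @ a # u @ a # R"
    and "set S \<subseteq> set R"
proof -
  obtain Us1 Us2 where "Us = Us1 @ u # Us2"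
    using split_list[OF assms] by blast
  moreover have "a # concat (map (\<lambda>u. u @ [a]) Us1) = concat (map (\<lambda>u. a # u) Us1) @ [a]"
    by (induction Us1) simp_all
  ultimately show ?thesis
    by (intro that[of "concat (map (\<lambda>u. a # u) Us1)" "concat (map (\<lambda>u. u @ [a]) Us2) @ S"]) simp_all
qed

lemma append_eq_append_same_last:
  assumes "u @ r = v @ r'" "u \<noteq> []" "v \<noteq> []" "last u = last v"
    and "last u \<notin> set r" "last u \<notin> set r'"
  shows "u = v"
proof -
  obtain us where us: "u = v @ us \<and> r' = us @ r \<or> u @ us = v \<and> r = us @ r'"
    using assms(1) by (auto simp: append_eq_append_conv2)
  have "us = []"
  proof (rule ccontr)
    assume "us \<noteq> []"
    then have "last us = last u" "last us \<in> set us"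
      using us assms(4) by auto
    then show False
      using us assms(5,6) by auto
  qed
  then show ?thesis
    using us by auto
qed

lemma concat_map_snoc_inj:
  assumes "concat (map (\<lambda>x. x @ [l]) xs) = concat (map (\<lambda>y. y @ [l]) ys)"
    and "\<forall>x\<in>set xs. l \<notin> set x" "\<forall>y\<in>set ys. l \<notin> set y"
  shows "xs = ys"
  using assms
proof (induction xs arbitrary: ys)
  case Nil
  then show ?case by (cases ys) auto
next
  case (Cons x xs)
  then obtain y ys' where ys: "ys = y # ys'"
    by (cases ys) auto
  have "x @ l # concat (map (\<lambda>x. x @ [l]) xs) = y @ l # concat (map (\<lambda>y. y @ [l]) ys')"
    using Cons.prems(1) ys by simp
  then have "x = y" "concat (map (\<lambda>x. x @ [l]) xs) = concat (map (\<lambda>y. y @ [l]) ys')"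
    using Cons.prems(2,3) ys by (auto simp: append_eq_append_conv2 Cons_eq_append_conv append_eq_Cons_conv)
  then show ?case
    using Cons ys by simp
qed

section \<open>The encoding phi\<close>

lemma phi_Nil [simp]: "phi [] = []"
  and phi_Cons [simp]: "phi (t # F) = W t @ phi F"
  by (simp_all add: phi_def)

lemma forest_labels_Nil [simp]: "forest_labels [] = []"
  and forest_labels_Cons [simp]: "forest_labels (t # F) = node_labels t @ forest_labels F"
  by (simp_all add: forest_labels_def)

lemma W_CNode: "W (CNode l cs) = l # concat (map (\<lambda>c. phi c @ [l]) cs)"
  by (simp add: phi_def)

lemma node_labels_CNode: "node_labels (CNode l cs) = l # concat (map forest_labels cs)"
  by (simp add: forest_labels_def[abs_def])

declare W.simps [simp del] node_labels.simps [simp del]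

lemma set_W: "set (W t) = set (node_labels t)"
  by (induction t) (auto simp: W_CNode node_labels_CNode phi_def forest_labels_def)

lemma set_phi: "set (phi F) = set (forest_labels F)"
  by (simp add: phi_def forest_labels_def set_W)

lemma repeat_mset_sum_list: "repeat_mset k (sum_list Ms) = sum_list (map (repeat_mset k) Ms)"
  by (induction Ms) simp_all

lemma sum_list_map_add_mset:
  "(\<Sum>x\<leftarrow>xs. add_mset a (f x)) = sum_list (map f xs) + replicate_mset (length xs) a"
  by (induction xs) simp_all

lemma mset_W:
  assumes "wf_node k t" "k \<ge> 1"
  shows "mset (W t) = repeat_mset k (mset (node_labels t))"
  using assms(1)
proof (induction t)
  case (CNode l cs)
  have "mset (phi c) = repeat_mset k (mset (forest_labels c))" if "c \<in> set cs" for c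
    using CNode that
    by (simp add: phi_def forest_labels_def mset_concat repeat_mset_sum_list comp_def cong: map_cong)
  then have "mset (W (CNode l cs)) =
      add_mset l (repeat_mset k (\<Sum>c\<leftarrow>cs. mset (forest_labels c)) + replicate_mset (length cs) l)"
    by (simp add: W_CNode mset_concat comp_def sum_list_map_add_mset repeat_mset_sum_list cong: map_cong)
  also have "\<dots> = repeat_mset k (mset (node_labels (CNode l cs)))"
    using CNode.prems assms(2)
    by (simp add: node_labels_CNode mset_concat comp_def replicate_mset_Suc[symmetric])
  finally show ?case .
qed

lemma mset_phi:
  assumes "\<forall>t\<in>set F. wf_node k t" "k \<ge> 1"
  shows "mset (phi F) = repeat_mset k (mset (forest_labels F))"
  using assms by (induction F) (simp_all add: mset_W)

lemma W_not_Nil: "W t \<noteq> []"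
  by (cases t) (simp add: W_CNode)

lemma last_W: "last (W t) = hd (W t)"
proof (cases t)
  case (CNode l cs)
  have "last (l # concat (map (\<lambda>c. phi c @ [l]) cs)) = l"
    by (induction cs rule: rev_induct) simp_all
  then show ?thesis
    using CNode by (simp add: W_CNode)
qed

lemma hd_W_in_node_labels: "hd (W t) \<in> set (node_labels t)"
  using W_not_Nil set_W by (metis hd_in_set)

lemma abab_free_phi:
  "(\<forall>t\<in>set F. abab_free (W t)) \<Longrightarrow> distinct (forest_labels F) \<Longrightarrow> abab_free (phi F)"
proof (induction F)
  case Nil
  then show ?case by (simp add: abab_free_short)
next
  case (Cons t G)
  then show ?case
    using abab_free_insert[of "W t" "[]" "phi G"] by (auto simp: set_phi set_W)
qed

lemma abab_free_W_CNode:
  "(\<forall>c\<in>set cs. abab_free (phi c)) \<Longrightarrow> distinct (node_labels (CNode l cs)) \<Longrightarrow>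
    abab_free (W (CNode l cs))"
proof (induction cs rule: rev_induct)
  case Nil
  then show ?case by (simp add: W_CNode abab_free_short)
next
  case (snoc c cs)
  let ?Z = "W (CNode l cs)"
  have "last ?Z = l"
    using last_W[of "CNode l cs"] by (simp add: W_CNode)
  then have "?Z = butlast ?Z @ [l]"
    using W_not_Nil by (metis append_butlast_last_id)
  moreover have "abab_free ?Z"
    using snoc by (simp add: node_labels_CNode)
  ultimately have "abab_free (?Z @ [l])"
    by (metis abab_free_snoc_repeat append_Cons append_assoc self_append_conv2)
  moreover have "set (phi c) \<inter> set (?Z @ [l]) = {}"
    using snoc.prems(2) by (auto simp: set_W set_phi node_labels_CNode)
  ultimately have "abab_free (?Z @ phi c @ [l])"
    using snoc.prems(1) by (intro abab_free_insert) simp_all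
  then show ?case
    by (simp add: W_CNode)
qed

lemma abab_free_W: "distinct (node_labels t) \<Longrightarrow> abab_free (W t)"
proof (induction t)
  case (CNode l cs)
  have "abab_free (phi c)" if "c \<in> set cs" for c
  proof (rule abab_free_phi)
    have "distinct (forest_labels c)"
      using CNode.prems that by (simp add: node_labels_CNode distinct_concat_iff)
    then show "distinct (forest_labels c)" "\<forall>t\<in>set c. abab_free (W t)"
      using CNode.IH[OF that] by (auto simp: forest_labels_def distinct_concat_iff)
  qed
  then show ?case
    using CNode.prems by (simp add: abab_free_W_CNode)
qed

lemma abab_free_phi_if_distinct: "distinct (forest_labels F) \<Longrightarrow> abab_free (phi F)"
  by (intro abab_free_phi) (auto simp: forest_labels_def distinct_concat_iff intro: abab_free_W)

section \<open>Injectivity and decoding\<close>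

lemma phi_eq_imp_eq:
  assumes "\<And>t t'. t \<in> set F \<Longrightarrow> distinct (node_labels t) \<Longrightarrow> distinct (node_labels t') \<Longrightarrow>
      W t = W t' \<Longrightarrow> t = t'"
    and "distinct (forest_labels F)" "distinct (forest_labels F')" "phi F = phi F'"
  shows "F = F'"
  using assms
proof (induction F arbitrary: F')
  case Nil
  then show ?case by (cases F') (auto simp: W_not_Nil)
next
  case (Cons t G)
  then obtain t' G' where F': "F' = t' # G'"
    by (cases F') (auto simp: W_not_Nil)
  have eq: "W t @ phi G = W t' @ phi G'"
    using Cons.prems(4) F' by simp
  then have "hd (W t) = hd (W t')"
    by (metis W_not_Nil hd_append2)
  moreover have "hd (W t) \<notin> set (phi G)" "hd (W t') \<notin> set (phi G')"
    using Cons.prems(2,3) F' hd_W_in_node_labels by (auto simp: set_phi)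
  ultimately have "W t = W t'"
    using append_eq_append_same_last[OF eq W_not_Nil W_not_Nil] by (simp add: last_W)
  then have "t = t'" "phi G = phi G'"
    using Cons.prems eq F' by auto
  moreover have "G = G'"
    using Cons F' \<open>phi G = phi G'\<close> by simp
  ultimately show ?case
    using F' by simp
qed

lemma W_eq_imp_eq:
  "distinct (node_labels t) \<Longrightarrow> distinct (node_labels t') \<Longrightarrow> W t = W t' \<Longrightarrow> t = t'"
proof (induction t arbitrary: t')
  case (CNode l cs)
  obtain l' cs' where t': "t' = CNode l' cs'"
    by (cases t')
  have "l' = l"
    using CNode.prems(3) t' by (simp add: W_CNode)
  have labels: "distinct (concat (map forest_labels cs))" "l \<notin> set (concat (map forest_labels cs))"
    "distinct (concat (map forest_labels cs'))" "l \<notin> set (concat (map forest_labels cs'))"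
    using CNode.prems(1,2) t' \<open>l' = l\<close> by (simp_all add: node_labels_CNode)
  have "concat (map (\<lambda>x. x @ [l]) (map phi cs)) = concat (map (\<lambda>x. x @ [l]) (map phi cs'))"
    using CNode.prems(3) t' \<open>l' = l\<close> by (simp add: W_CNode comp_def)
  then have "map phi cs = map phi cs'"
    using labels(2,4) by (intro concat_map_snoc_inj) (auto simp: set_phi)
  then have len: "length cs = length cs'"
    by (metis length_map)
  have "phi (cs ! i) = phi (cs' ! i)" if "i < length cs" for i
    using that len \<open>map phi cs = map phi cs'\<close> by (metis nth_map)
  have "cs ! i = cs' ! i" if i: "i < length cs" for i
  proof (rule phi_eq_imp_eq)
    show "t = t''" if "t \<in> set (cs ! i)" "distinct (node_labels t)" "distinct (node_labels t'')"
      "W t = W t''" for t t''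
      using CNode.IH[OF nth_mem[OF i]] that by blast
    show "distinct (forest_labels (cs ! i))" "distinct (forest_labels (cs' ! i))"
      using labels(1,3) i len by (simp_all add: distinct_concat_iff)
    show "phi (cs ! i) = phi (cs' ! i)"
      using i by fact
  qed
  then show ?case
    using t' \<open>l' = l\<close> len by (simp add: nth_equalityI)
qed

lemma inj_on_phi: "inj_on phi {F. distinct (forest_labels F)}"
  by (auto intro: inj_onI phi_eq_imp_eq W_eq_imp_eq)

lemma abab_free_decompose:
  assumes "abab_free (a # r)" "\<forall>c\<in>set (a # r). count (mset (a # r)) c = k"
  obtains Us S where "r = concat (map (\<lambda>u. u @ [a]) Us) @ S" "length Us = k - 1"
    and "\<forall>u\<in>set Us. abab_free u \<and> (\<forall>c\<in>set u. count (mset u) c = k)"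
    and "abab_free S" "\<forall>c\<in>set S. count (mset S) c = k"
proof -
  have "Suc (count (mset r) a) = k"
    using assms(2) by simp
  then have "count (mset r) a = k - 1"
    by simp
  from split_at_occurrences[OF this] obtain Us S
    where r: "r = concat (map (\<lambda>u. u @ [a]) Us) @ S" and len: "length Us = k - 1"
      and a_Us: "\<forall>u\<in>set Us. a \<notin> set u" and a_S: "a \<notin> set S"
    by blast
  have block: "abab_free u \<and> (\<forall>c\<in>set u. count (mset u) c = k) \<and> set u \<inter> set S = {}"
    if u: "u \<in> set Us" for u
  proof -
    obtain L R where LR: "a # concat (map (\<lambda>u. u @ [a]) Us) @ S = L @ a # u @ a # R"
      and "set S \<subseteq> set R"
      by (rule split_around_block[OF u])
    have w: "a # r = (L @ [a]) @ u @ (a # R)"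
      using LR r by simp
    have "c \<notin> set L \<and> c \<notin> set R" if "c \<in> set u" for c
      using abab_free_separates[of L a u R c] assms(1) w a_Us u that by auto
    then have disj: "set u \<inter> set ((L @ [a]) @ a # R) = {}"
      using a_Us u by auto
    from assms[unfolded w] this have "abab_free u \<and> (\<forall>c\<in>set u. count (mset u) c = k)"
      by (rule abab_free_factor)
    moreover have "set u \<inter> set S = {}"
      using disj \<open>set S \<subseteq> set R\<close> by auto
    ultimately show ?thesis
      by blast
  qed
  have w: "a # r = (a # concat (map (\<lambda>u. u @ [a]) Us)) @ S @ []"
    using r by simp
  have "set S \<inter> set ((a # concat (map (\<lambda>u. u @ [a]) Us)) @ []) = {}"
    using block a_S by auto
  with assms[unfolded w] have S: "abab_free S \<and> (\<forall>c\<in>set S. count (mset S) c = k)"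
    by (rule abab_free_factor)
  have "\<forall>u\<in>set Us. abab_free u \<and> (\<forall>c\<in>set u. count (mset u) c = k)"
    using block by blast
  from that[OF r len this] S show thesis
    by blast
qed

lemma ex_phi_preimage:
  "abab_free w \<Longrightarrow> \<forall>c\<in>set w. count (mset w) c = k \<Longrightarrow>
    \<exists>F. (\<forall>t\<in>set F. wf_node k t) \<and> phi F = w"
proof (induction "length w" arbitrary: w rule: less_induct)
  case less
  show ?case
  proof (cases w)
    case Nil
    then show ?thesis
      by (intro exI[of _ "[]"]) simp
  next
    case (Cons a r)
    from less.prems have "abab_free (a # r)" "\<forall>c\<in>set (a # r). count (mset (a # r)) c = k"
      unfolding Cons .
    then obtain Us S where r: "r = concat (map (\<lambda>u. u @ [a]) Us) @ S" and len: "length Us = k - 1"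
      and Us: "\<forall>u\<in>set Us. abab_free u \<and> (\<forall>c\<in>set u. count (mset u) c = k)"
      and S: "abab_free S" "\<forall>c\<in>set S. count (mset S) c = k"
      by (rule abab_free_decompose)
    have "length S < length w"
      using Cons r by simp
    then obtain FS where FS: "\<forall>t\<in>set FS. wf_node k t" "phi FS = S"
      using less.hyps[OF _ S] by blast
    have "\<exists>F. (\<forall>t\<in>set F. wf_node k t) \<and> phi F = u" if u: "u \<in> set Us" for u
    proof -
      obtain Us1 Us2 where "Us = Us1 @ u # Us2"
        using split_list[OF u] by blast
      then have "length u < length w"
        using Cons r by simp
      moreover have "abab_free u" "\<forall>c\<in>set u. count (mset u) c = k"
        using Us u by blast+
      ultimately show ?thesis
        by (rule less.hyps)
    qed
    then obtain g where g: "\<And>u. u \<in> set Us \<Longrightarrow> (\<forall>t\<in>set (g u). wf_node k t) \<and> phi (g u) = u"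
      by metis
    define T where "T = CNode a (map g Us)"
    have "wf_node k T"
      using len g by (auto simp: T_def)
    moreover have "W T = a # concat (map (\<lambda>u. u @ [a]) Us)"
      using g by (simp add: T_def W_CNode comp_def cong: map_cong)
    ultimately show ?thesis
      using FS Cons r by (intro exI[of _ "T # FS"]) simp
  qed
qed

section \<open>Quasi-Stirling permutations\<close>

lemma mset_eq_mset_set_iff:
  assumes "finite A"
  shows "mset xs = mset_set A \<longleftrightarrow> distinct xs \<and> set xs = A"
proof -
  obtain ys where ys: "distinct ys" "set ys = A"
    using finite_distinct_list[OF assms] by blast
  then have "mset_set A = mset ys"
    using mset_set_set by blast
  then show ?thesis
    using ys by (metis mset_eq_imp_distinct_iff mset_eq_setD set_eq_iff_mset_eq_distinct)
qed

lemma sum_replicate_mset_eq_repeat_mset: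
  "finite A \<Longrightarrow> (\<Sum>i\<in>A. replicate_mset k i) = repeat_mset k (mset_set A)"
  by (induction A rule: finite_induct) simp_all

lemma quasi_stirling_eq:
  "quasi_stirling k n = {w. mset w = repeat_mset k (mset_set {1..n}) \<and> abab_free w}"
  by (simp add: quasi_stirling_def abab_free_iff_no_indices sum_replicate_mset_eq_repeat_mset)

lemma count_quasi_stirling:
  assumes "w \<in> quasi_stirling k n" "x \<in> set w"
  shows "count (mset w) x = k"
proof -
  have "mset w = repeat_mset k (mset_set {1..n})"
    using assms(1) by (simp add: quasi_stirling_eq)
  with assms(2) show ?thesis
    by (metis count_repeat_mset count_mset_0_iff count_mset_set' mult.right_neutral mult_zero_right)
qed

lemma phi_in_quasi_stirling_iff:
  assumes "\<forall>t\<in>set F. wf_node k t" "k \<ge> 1"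
  shows "phi F \<in> quasi_stirling k n \<longleftrightarrow> F \<in> compartmented_trees k n"
proof -
  have "mset (phi F) = repeat_mset k (mset_set {1..n}) \<longleftrightarrow>
      distinct (forest_labels F) \<and> set (forest_labels F) = {1..n}"
    using assms by (simp add: mset_phi repeat_mset_cancel1 mset_eq_mset_set_iff)
  then show ?thesis
    using assms(1) abab_free_phi_if_distinct
    by (auto simp: quasi_stirling_eq compartmented_trees_def)
qed

theorem theorem4p2:
  fixes k n :: nat
  assumes "k \<ge> 2"
  shows "bij_betw phi (compartmented_trees k n) (quasi_stirling k n)"
proof -
  have k: "k \<ge> 1"
    using assms by simp
  have "inj_on phi (compartmented_trees k n)"
    by (rule inj_on_subset[OF inj_on_phi]) (auto simp: compartmented_trees_def)
  moreover have "phi ` compartmented_trees k n \<subseteq> quasi_stirling k n"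
    using phi_in_quasi_stirling_iff[OF _ k] by (auto simp: compartmented_trees_def)
  moreover have "quasi_stirling k n \<subseteq> phi ` compartmented_trees k n"
  proof
    fix w
    assume w: "w \<in> quasi_stirling k n"
    then have "abab_free w"
      by (simp add: quasi_stirling_eq)
    then obtain F where F: "\<forall>t\<in>set F. wf_node k t" "phi F = w"
      using ex_phi_preimage count_quasi_stirling[OF w] by blast
    then show "w \<in> phi ` compartmented_trees k n"
      using phi_in_quasi_stirling_iff[OF F(1) k] w by blast
  qed
  ultimately show ?thesis
    by (auto simp: bij_betw_def)
qed

end
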